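(* Let $\mathcal S,\mathcal T$ be Hermitian operators on a finite-dimensional Hilbert space satisfying $\mathcal S^2+\mathcal T^2=\mathbb 1$, let $|\psi\rangle$ be a unit vector, and let $m$ be a positive integer. Then $$\langle\psi|(\mathbb 1+\mathcal S)^m+(\mathbb 1+\mathcal T)^m|\psi\rangle\le\max_{\theta\in\mathbb R}\Big((1+\cos\theta)^m+(1+\sin\theta)^m\Big).$$ *)

theory Defs
  imports "Jordan_Normal_Form.Schur_Decomposition"
begin

definition hermitian_mat :: "complex mat \<Rightarrow> bool" where
  "hermitian_mat A \<longleftrightarrow> dim_row A = dim_col A \<and> mat_adjoint A = A"

end

theory Submission
  imports Defs "Jordan_Normal_Form.Spectral_Radius"
begin

(* Diagonalize S = U diag(d) U* and T = V diag(e) V* with U, V unitary and write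
   phi = U* psi, w = V* psi.  The (1 + S)^m term contributes sum_i (1 + d_i)^m |phi_i|^2.
   For the T term, (1 + e_j)^m <= h(e_j^2) with h x = (1 + sqrt x)^m.  The unitary
   X = U* V relating the two eigenbases satisfies diag(d^2) X + X diag(e^2) = X, which is
   S^2 + T^2 = 1 read in these bases; so X_ij <> 0 forces 1 - d_i^2 = e_j^2, hence X
   intertwines diag(h(1 - d^2)) with diag(h(e^2)), and the expectation of h(T^2) in psi
   equals sum_i h(1 - d_i^2) |phi_i|^2.  Altogether the left-hand side is at most
   sum_i ((1 + d_i)^m + (1 + sqrt (1 - d_i^2))^m) |phi_i|^2, a convex combination of values
   of the trigonometric expression at theta = arccos |d_i|. *)

section \<open>Adjoints and unitary matrices\<close>

lemma mat_adjoint_carrier [simp]: "A \<in> carrier_mat m n \<Longrightarrow> mat_adjoint A \<in> carrier_mat n m"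
  and dim_row_mat_adjoint [simp]: "dim_row (mat_adjoint A) = dim_col A"
  and dim_col_mat_adjoint [simp]: "dim_col (mat_adjoint A) = dim_row A"
  unfolding mat_adjoint_def by (auto simp: mat_of_rows_def)

lemma index_mat_adjoint [simp]:
  "i < dim_col A \<Longrightarrow> j < dim_row A \<Longrightarrow> mat_adjoint A $$ (i, j) = conjugate (A $$ (j, i))"
  unfolding mat_adjoint_def by (auto simp: mat_of_rows_def)

lemma mat_adjoint_mat_adjoint [simp]: "mat_adjoint (mat_adjoint (A :: complex mat)) = A"
  by (rule eq_matI) auto

lemma mat_adjoint_mult:
  assumes "A \<in> carrier_mat n k" and "B \<in> carrier_mat k p"
  shows "mat_adjoint (A * B) = mat_adjoint B * mat_adjoint (A :: complex mat)"
  using assms by (intro eq_matI) (auto simp: scalar_prod_def cnj_sum intro!: sum.cong)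

lemma mat_adjoint_mult_vec_cscalar_prod:
  assumes A: "A \<in> carrier_mat n n" and x: "x \<in> carrier_vec n" and y: "y \<in> carrier_vec n"
  shows "(A *\<^sub>v x) \<bullet>c y = x \<bullet>c (mat_adjoint A *\<^sub>v (y :: complex vec))"
proof -
  have "(A *\<^sub>v x) \<bullet>c y = (\<Sum>i<n. \<Sum>j<n. A $$ (i, j) * x $ j * cnj (y $ i))"
    using A x y by (auto simp: scalar_prod_def lessThan_atLeast0 sum_distrib_right intro!: sum.cong)
  also have "\<dots> = (\<Sum>j<n. \<Sum>i<n. A $$ (i, j) * x $ j * cnj (y $ i))"
    by (rule sum.swap)
  also have "\<dots> = x \<bullet>c (mat_adjoint A *\<^sub>v y)"
    using A x y by (auto simp: scalar_prod_def lessThan_atLeast0 cnj_sum sum_distrib_left mult_ac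
        intro!: sum.cong)
  finally show ?thesis .
qed

lemma cscalar_prod_self:
  assumes "(w :: complex vec) \<in> carrier_vec n"
  shows "w \<bullet>c w = of_real (\<Sum>i<n. (cmod (w $ i))\<^sup>2)"
  using assms by (simp add: scalar_prod_def lessThan_atLeast0 complex_norm_square del: of_real_power)

lemma cscalar_prod_self_pos:
  assumes "(w :: complex vec) \<in> carrier_vec n" and "w \<noteq> 0\<^sub>v n"
  shows "Re (w \<bullet>c w) > 0"
proof -
  have "w \<bullet>c w \<noteq> 0" using assms by simp
  then have "(\<Sum>i<n. (cmod (w $ i))\<^sup>2) \<noteq> 0"
    unfolding cscalar_prod_self[OF assms(1)] by (simp only: of_real_eq_0_iff not_False_eq_True)
  moreover have "(\<Sum>i<n. (cmod (w $ i))\<^sup>2) \<ge> 0" by (simp add: sum_nonneg)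
  ultimately show ?thesis unfolding cscalar_prod_self[OF assms(1)] by simp
qed

lemma square_mult_carrier_mat [simp]:
  "A \<in> carrier_mat n n \<Longrightarrow> B \<in> carrier_mat n n \<Longrightarrow> A * B \<in> carrier_mat n n"
  by auto

definition unitary_mat :: "complex mat \<Rightarrow> nat \<Rightarrow> bool" where
  "unitary_mat U n \<longleftrightarrow>
     U \<in> carrier_mat n n \<and> mat_adjoint U * U = 1\<^sub>m n \<and> U * mat_adjoint U = 1\<^sub>m n"

lemma unitary_matD:
  assumes "unitary_mat U n"
  shows "U \<in> carrier_mat n n" "mat_adjoint U \<in> carrier_mat n n"
    "mat_adjoint U * U = 1\<^sub>m n" "U * mat_adjoint U = 1\<^sub>m n"
  using assms unfolding unitary_mat_def by auto

lemma unitary_mat_adjoint: "unitary_mat U n \<Longrightarrow> unitary_mat (mat_adjoint U) n"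
  unfolding unitary_mat_def by auto

lemma unitary_mat_mult:
  assumes U: "unitary_mat U n" and V: "unitary_mat V n"
  shows "unitary_mat (U * V) n"
proof -
  note U' = unitary_matD[OF U] and V' = unitary_matD[OF V]
  have "mat_adjoint (U * V) * (U * V) = mat_adjoint V * ((mat_adjoint U * U) * V)"
    using U'(1,2) V'(1,2) by (simp add: mat_adjoint_mult[of _ n n] assoc_mult_mat[of _ n n _ n _ n])
  then have "mat_adjoint (U * V) * (U * V) = 1\<^sub>m n" using U' V' by simp
  moreover have "(U * V) * mat_adjoint (U * V) = U * ((V * mat_adjoint V) * mat_adjoint U)"
    using U'(1,2) V'(1,2) by (simp add: mat_adjoint_mult[of _ n n] assoc_mult_mat[of _ n n _ n _ n])
  then have "(U * V) * mat_adjoint (U * V) = 1\<^sub>m n" using U' V' by simp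
  ultimately show ?thesis
    using U' V' unfolding unitary_mat_def by auto
qed

lemma unitary_mat_of_cols:
  assumes ws: "set ws \<subseteq> carrier_vec n" "length ws = n"
    and orthonormal: "\<And>i j. i < n \<Longrightarrow> j < n \<Longrightarrow> ws ! j \<bullet>c ws ! i = (if i = j then 1 else 0)"
  shows "unitary_mat (mat_of_cols n ws) n"
proof -
  let ?W = "mat_of_cols n ws"
  have W: "?W \<in> carrier_mat n n" using ws by auto
  have col_W: "col ?W k = ws ! k" if "k < n" for k
    using ws that by (intro col_mat_of_cols) auto
  have "mat_adjoint ?W * ?W = 1\<^sub>m n"
  proof (rule eq_matI)
    fix i j assume "i < dim_row (1\<^sub>m n)" "j < dim_col (1\<^sub>m n)"
    then have i: "i < n" and j: "j < n" by auto
    have "(mat_adjoint ?W * ?W) $$ (i, j) = col ?W j \<bullet>c col ?W i"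
      using ws(2) i j by (auto simp: scalar_prod_def intro!: sum.cong)
    also have "\<dots> = 1\<^sub>m n $$ (i, j)"
      using i j orthonormal[of i j] by (simp add: col_W)
    finally show "(mat_adjoint ?W * ?W) $$ (i, j) = 1\<^sub>m n $$ (i, j)" .
  qed (use W in auto)
  moreover from this have "?W * mat_adjoint ?W = 1\<^sub>m n"
    by (intro mat_mult_left_right_inverse[OF _ W]) (use W in auto)
  ultimately show ?thesis using W unfolding unitary_mat_def by auto
qed

definition normalize_cvec :: "complex vec \<Rightarrow> complex vec" where
  "normalize_cvec w = complex_of_real (1 / sqrt (Re (w \<bullet>c w))) \<cdot>\<^sub>v w"

lemma normalize_cvec_carrier [simp]: "w \<in> carrier_vec n \<Longrightarrow> normalize_cvec w \<in> carrier_vec n"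
  unfolding normalize_cvec_def by simp

lemma cscalar_prod_normalize_cvec:
  assumes "v \<in> carrier_vec n" and "w \<in> carrier_vec n"
  shows "normalize_cvec v \<bullet>c normalize_cvec w
    = complex_of_real (1 / sqrt (Re (v \<bullet>c v)) * (1 / sqrt (Re (w \<bullet>c w)))) * (v \<bullet>c w)"
  using assms by (simp add: normalize_cvec_def conjugate_smult_vec)

lemma normalize_cvec_self:
  assumes "w \<in> carrier_vec n" and "w \<noteq> 0\<^sub>v n"
  shows "normalize_cvec w \<bullet>c normalize_cvec w = 1"
proof -
  have pos: "Re (w \<bullet>c w) > 0" by (rule cscalar_prod_self_pos[OF assms])
  have "w \<bullet>c w = complex_of_real (Re (w \<bullet>c w))"
    using cscalar_prod_self[OF assms(1)] by simp
  then have "normalize_cvec w \<bullet>c normalize_cvec w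
      = complex_of_real (1 / sqrt (Re (w \<bullet>c w)) * (1 / sqrt (Re (w \<bullet>c w))) * Re (w \<bullet>c w))"
    unfolding cscalar_prod_normalize_cvec[OF assms(1) assms(1)] by (metis of_real_mult)
  also have "\<dots> = 1" using pos by (simp add: field_simps)
  finally show ?thesis .
qed

lemma unitary_mat_first_col_exists:
  assumes v: "v \<in> carrier_vec n" and v0: "v \<noteq> 0\<^sub>v n"
  shows "\<exists>W c. unitary_mat W n \<and> col W 0 = c \<cdot>\<^sub>v v"
proof -
  interpret cof_vec_space n "TYPE(complex)" .
  have n: "0 < n" using v v0 by (cases n) auto
  obtain vs where vs: "basis_completion v = v # vs"
    by (simp add: basis_completion_def Let_def)
  note basis = basis_completion[OF v v0, unfolded vs]
  define ws where "ws = gram_schmidt n (v # vs)"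
  have ws: "set ws \<subseteq> carrier_vec n" "corthogonal ws" "length ws = n"
    using gram_schmidt_result[OF basis(2,4,5) ws_def] basis(6) by auto
  have ws0: "ws ! 0 = v"
    using gram_schmidt_hd[OF v, of vs] ws(3) n unfolding ws_def[symmetric] by (cases ws) auto
  define W where "W = mat_of_cols n (map normalize_cvec ws)"
  have "unitary_mat W n"
    unfolding W_def
  proof (rule unitary_mat_of_cols)
    fix i j assume i: "i < n" and j: "j < n"
    have wsc: "ws ! i \<in> carrier_vec n" "ws ! j \<in> carrier_vec n"
      using ws i j by auto
    show "map normalize_cvec ws ! j \<bullet>c map normalize_cvec ws ! i = (if i = j then 1 else 0)"
    proof (cases "i = j")
      case True
      have "ws ! i \<noteq> 0\<^sub>v n"
        using corthogonalD[OF ws(2), of i i] ws i by auto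
      then show ?thesis using True i ws(3) normalize_cvec_self[OF wsc(1)] by simp
    next
      case False
      then show ?thesis
        using i j ws corthogonalD[OF ws(2), of j i]
        by (simp add: cscalar_prod_normalize_cvec[OF wsc(2) wsc(1)])
    qed
  qed (use ws in auto)
  moreover have "col W 0 = normalize_cvec v"
    unfolding W_def using n ws ws0 v by (subst col_mat_of_cols) auto
  ultimately show ?thesis unfolding normalize_cvec_def by blast
qed

section \<open>Spectral theorem for Hermitian matrices\<close>

lemma hermitian_mat_unitary_conj:
  assumes A: "A \<in> carrier_mat n n" "hermitian_mat A" and W: "W \<in> carrier_mat n n"
  shows "hermitian_mat (mat_adjoint W * A * W)"
proof -
  have "mat_adjoint (mat_adjoint W * (A * W)) = mat_adjoint (A * W) * W"
    using A W by (simp add: mat_adjoint_mult[of _ n n _ n])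
  also have "\<dots> = mat_adjoint W * A * W"
    using A W unfolding hermitian_mat_def
    by (simp add: mat_adjoint_mult[of _ n n _ n] assoc_mult_mat[of _ n n _ n _ n])
  finally show ?thesis
    using A W unfolding hermitian_mat_def by (simp add: assoc_mult_mat[of _ n n _ n _ n])
qed

lemma unitary_conj_first_col_eigen:
  assumes A: "A \<in> carrier_mat n n" and W: "unitary_mat W n"
    and eigen: "A *\<^sub>v col W 0 = e \<cdot>\<^sub>v col W 0" and i: "i < n"
  shows "(mat_adjoint W * A * W) $$ (i, 0) = (if i = 0 then e else 0)"
proof -
  note W' = unitary_matD[OF W]
  have n: "0 < n" using i by simp
  have "(mat_adjoint W * A * W) $$ (i, 0) = row (mat_adjoint W) i \<bullet> col (A * W) 0"
    using A W' i n by (simp add: assoc_mult_mat[of _ n n _ n _ n])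
  also have "col (A * W) 0 = e \<cdot>\<^sub>v col W 0"
    using col_mult2[OF A W'(1) n] eigen by simp
  also have "row (mat_adjoint W) i \<bullet> (e \<cdot>\<^sub>v col W 0) = e * (row (mat_adjoint W) i \<bullet> col W 0)"
    using W'(1) by simp
  also have "row (mat_adjoint W) i \<bullet> col W 0 = (mat_adjoint W * W) $$ (i, 0)"
    using W'(1) i n by simp
  finally show ?thesis unfolding W'(3) using i n by simp
qed

lemma hermitian_mat_first_col_split:
  assumes A: "A \<in> carrier_mat (Suc k) (Suc k)" "hermitian_mat A"
    and col0: "\<And>i. i < Suc k \<Longrightarrow> A $$ (i, 0) = (if i = 0 then e else 0)"
  defines "B \<equiv> mat k k (\<lambda>(i, j). A $$ (Suc i, Suc j))"
  shows "hermitian_mat B"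
    and "A = four_block_mat (mat_diag 1 (\<lambda>_. complex_of_real (Re e))) (0\<^sub>m 1 k) (0\<^sub>m k 1) B"
proof -
  have adj: "mat_adjoint A = A" using A unfolding hermitian_mat_def by simp
  have entry: "cnj (A $$ (j, i)) = A $$ (i, j)" if "i < Suc k" "j < Suc k" for i j
    using index_mat_adjoint[of i A j] A that unfolding adj by simp
  show "hermitian_mat B"
    unfolding hermitian_mat_def B_def by (auto intro!: eq_matI simp: entry)
  have "cnj e = e" using entry[of 0 0] col0[of 0] by simp
  then have e: "complex_of_real (Re e) = e"
    by (metis Reals_cnj_iff complex_is_Real_iff of_real_Re)
  let ?A = "four_block_mat (mat_diag 1 (\<lambda>_. complex_of_real (Re e))) (0\<^sub>m 1 k) (0\<^sub>m k 1) B"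
  show "A = ?A"
  proof (rule eq_matI)
    fix i j assume "i < dim_row ?A" and "j < dim_col ?A"
    then have i: "i < Suc k" and j: "j < Suc k" unfolding B_def by (auto simp: mat_diag_def)
    show "A $$ (i, j) = ?A $$ (i, j)"
      using i j col0 entry[of 0 j] col0[of j] e unfolding B_def
      by (cases i; cases j) (auto simp: mat_diag_def)
  qed (use A in \<open>auto simp: B_def mat_diag_def\<close>)
qed

lemma unitary_conj_cancel:
  assumes W: "unitary_mat W n" and A: "A \<in> carrier_mat n n"
  shows "W * (mat_adjoint W * A * W) * mat_adjoint W = A"
proof -
  note W' = unitary_matD[OF W]
  have "W * (mat_adjoint W * A * W) * mat_adjoint W
      = (W * mat_adjoint W) * A * (W * mat_adjoint W)"
    using W'(1,2) A by (simp add: assoc_mult_mat[of _ n n _ n _ n])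
  then show ?thesis using W'(4) A by simp
qed

lemma mat_adjoint_four_block_one:
  assumes "(U :: complex mat) \<in> carrier_mat k k"
  shows "mat_adjoint (four_block_mat (1\<^sub>m 1) (0\<^sub>m 1 k) (0\<^sub>m k 1) U)
    = four_block_mat (1\<^sub>m 1) (0\<^sub>m 1 k) (0\<^sub>m k 1) (mat_adjoint U)"
  using assms by (intro eq_matI) auto

lemma unitary_mat_four_block_one:
  assumes "unitary_mat U k"
  shows "unitary_mat (four_block_mat (1\<^sub>m 1) (0\<^sub>m 1 k) (0\<^sub>m k 1) U) (Suc k)"
  using unitary_matD[OF assms]
  unfolding unitary_mat_def mat_adjoint_four_block_one[OF unitary_matD(1)[OF assms]]
  by (subst (1 2) mult_four_block_mat[of _ 1 1 _ k _ k _ _ 1 _ k]) auto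

lemma four_block_unitary_diag:
  assumes U: "unitary_mat U k"
  defines "U0 \<equiv> four_block_mat (1\<^sub>m 1) (0\<^sub>m 1 k) (0\<^sub>m k 1) U"
  shows "four_block_mat (mat_diag 1 (\<lambda>_. complex_of_real r)) (0\<^sub>m 1 k) (0\<^sub>m k 1)
      (U * mat_diag k (\<lambda>i. complex_of_real (d i)) * mat_adjoint U)
    = U0 * mat_diag (Suc k) (\<lambda>i. complex_of_real (if i = 0 then r else d (i - 1))) * mat_adjoint U0"
proof -
  note U' = unitary_matD[OF U]
  have diag: "mat_diag (Suc k) (\<lambda>i. complex_of_real (if i = 0 then r else d (i - 1)))
      = four_block_mat (mat_diag 1 (\<lambda>_. complex_of_real r)) (0\<^sub>m 1 k) (0\<^sub>m k 1)
          (mat_diag k (\<lambda>i. complex_of_real (d i)))"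
    by (intro eq_matI) (auto simp: mat_diag_def)
  have left: "U0 * mat_diag (Suc k) (\<lambda>i. complex_of_real (if i = 0 then r else d (i - 1)))
      = four_block_mat (mat_diag 1 (\<lambda>_. complex_of_real r)) (0\<^sub>m 1 k) (0\<^sub>m k 1)
          (U * mat_diag k (\<lambda>i. complex_of_real (d i)))"
    unfolding U0_def diag using U'(1)
    by (subst mult_four_block_mat[of _ 1 1 _ k _ k _ _ 1 _ k]) (auto simp: mat_diag_def)
  show ?thesis
    unfolding left unfolding U0_def mat_adjoint_four_block_one[OF U'(1)] using U'(1,2)
    by (subst mult_four_block_mat[of _ 1 1 _ k _ k _ _ 1 _ k]) (auto simp: mat_diag_def)
qed

theorem hermitian_mat_unitary_diagonalizable:
  assumes "A \<in> carrier_mat n n" and "hermitian_mat A"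
  shows "\<exists>U d. unitary_mat U n \<and> A = U * mat_diag n (\<lambda>i. complex_of_real (d i)) * mat_adjoint U"
  using assms
proof (induction n arbitrary: A)
  case 0
  then show ?case
    by (intro exI[of _ "1\<^sub>m 0"]) (auto simp: unitary_mat_def intro!: eq_matI)
next
  case (Suc k)
  then have A: "A \<in> carrier_mat (Suc k) (Suc k)" and herm: "hermitian_mat A" by auto
  obtain e where "eigenvalue A e"
    using spectrum_non_empty[OF A] unfolding spectrum_def by auto
  then obtain v where v: "v \<in> carrier_vec (Suc k)" "v \<noteq> 0\<^sub>v (Suc k)" and Av: "A *\<^sub>v v = e \<cdot>\<^sub>v v"
    using A unfolding eigenvalue_def eigenvector_def by auto
  obtain W c where W: "unitary_mat W (Suc k)" and W0: "col W 0 = c \<cdot>\<^sub>v v"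
    using unitary_mat_first_col_exists[OF v] by blast
  note W' = unitary_matD[OF W]
  define A' where "A' = mat_adjoint W * A * W"
  have A': "A' \<in> carrier_mat (Suc k) (Suc k)" "hermitian_mat A'"
    unfolding A'_def using A herm W'(1,2) hermitian_mat_unitary_conj by auto
  have "A *\<^sub>v col W 0 = e \<cdot>\<^sub>v col W 0"
    unfolding W0 using A v Av by (simp add: mult_mat_vec smult_smult_assoc mult.commute)
  then have col0: "A' $$ (i, 0) = (if i = 0 then e else 0)" if "i < Suc k" for i
    unfolding A'_def using unitary_conj_first_col_eigen[OF A W] that by blast
  define B where "B = mat k k (\<lambda>(i, j). A' $$ (Suc i, Suc j))"
  obtain U d where U: "unitary_mat U k"
    and B: "B = U * mat_diag k (\<lambda>i. complex_of_real (d i)) * mat_adjoint U"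
    using Suc.IH[of B] hermitian_mat_first_col_split(1)[OF A' col0] unfolding B_def by auto
  define U0 where "U0 = four_block_mat (1\<^sub>m 1) (0\<^sub>m 1 k) (0\<^sub>m k 1) U"
  define d0 where "d0 = (\<lambda>i. if i = 0 then Re e else d (i - 1))"
  have "A' = U0 * mat_diag (Suc k) (\<lambda>i. complex_of_real (d0 i)) * mat_adjoint U0"
    using hermitian_mat_first_col_split(2)[OF A' col0] four_block_unitary_diag[OF U]
    unfolding U0_def d0_def B_def[symmetric] B by (simp add: if_distrib)
  then have "A = (W * U0) * mat_diag (Suc k) (\<lambda>i. complex_of_real (d0 i)) * mat_adjoint (W * U0)"
    using unitary_conj_cancel[OF W A] unitary_matD[OF unitary_mat_four_block_one[OF U]] W'(1,2)
    unfolding A'_def U0_def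
    by (simp add: mat_adjoint_mult[of _ "Suc k" "Suc k" _ "Suc k"]
        assoc_mult_mat[of _ "Suc k" "Suc k" _ "Suc k" _ "Suc k"])
  then show ?case using unitary_mat_mult[OF W unitary_mat_four_block_one[OF U]]
    unfolding U0_def by blast
qed

section \<open>Unitarily diagonalized matrices\<close>

lemma dim_row_mat_diag [simp]: "dim_row (mat_diag n f) = n"
  and dim_col_mat_diag [simp]: "dim_col (mat_diag n f) = n"
  by (simp_all add: mat_diag_def)

lemma mat_diag_mult_vec:
  assumes "x \<in> carrier_vec n"
  shows "mat_diag n f *\<^sub>v x = vec n (\<lambda>i. f i * x $ i :: 'a :: semiring_1)"
  using assms
  by (intro eq_vecI)
    (auto simp: mat_diag_def scalar_prod_def sum.delta if_distrib[of "\<lambda>y. y * _"] cong: if_cong)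

lemma mat_diag_pow: "mat_diag n f ^\<^sub>m k = mat_diag n (\<lambda>i. f i ^ k :: 'a :: comm_semiring_1)"
  by (induction k) (auto simp: mult.commute)

lemma one_plus_mat_diag: "1\<^sub>m n + mat_diag n f = mat_diag n (\<lambda>i. 1 + f i :: 'a :: semiring_1)"
  by (intro eq_matI) (auto simp: mat_diag_def)

lemma unitary_conj_mult:
  assumes U: "unitary_mat U n" and D: "D \<in> carrier_mat n n" and E: "E \<in> carrier_mat n n"
  shows "(U * D * mat_adjoint U) * (U * E * mat_adjoint U) = U * (D * E) * mat_adjoint U"
proof -
  note U' = unitary_matD[OF U]
  have "(U * D * mat_adjoint U) * (U * E * mat_adjoint U)
      = U * (D * ((mat_adjoint U * U) * (E * mat_adjoint U)))"
    using U'(1,2) D E by (simp add: assoc_mult_mat[of _ n n _ n _ n])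
  then show ?thesis
    using U' D E by (simp add: assoc_mult_mat[of _ n n _ n _ n])
qed

lemma unitary_conj_pow:
  assumes U: "unitary_mat U n" and D: "D \<in> carrier_mat n n"
  shows "(U * D * mat_adjoint U) ^\<^sub>m k = U * (D ^\<^sub>m k) * mat_adjoint U"
proof (induction k)
  case 0
  then show ?case using unitary_matD[OF U] D by simp
next
  case (Suc k)
  then show ?case using unitary_conj_mult[OF U pow_carrier_mat[OF D] D] by simp
qed

lemma one_plus_unitary_conj:
  assumes U: "unitary_mat U n" and D: "D \<in> carrier_mat n n"
  shows "1\<^sub>m n + U * D * mat_adjoint U = U * (1\<^sub>m n + D) * mat_adjoint U"
proof -
  note U' = unitary_matD[OF U]
  have "U * (1\<^sub>m n + D) * mat_adjoint U = (U + U * D) * mat_adjoint U"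
    using mult_add_distrib_mat[OF U'(1) one_carrier_mat D] U'(1) by simp
  also have "\<dots> = U * mat_adjoint U + U * D * mat_adjoint U"
    using add_mult_distrib_mat[OF U'(1) _ U'(2), of "U * D"] U'(1) D by simp
  finally show ?thesis using U'(4) by simp
qed

lemma cscalar_prod_mult_vec_mat_adjoint:
  assumes U: "unitary_mat U n" and "x \<in> carrier_vec n" and "y \<in> carrier_vec n"
  shows "(mat_adjoint U *\<^sub>v x) \<bullet>c (mat_adjoint U *\<^sub>v y) = x \<bullet>c y"
proof -
  note U' = unitary_matD[OF U]
  have "(mat_adjoint U *\<^sub>v x) \<bullet>c (mat_adjoint U *\<^sub>v y) = x \<bullet>c (U *\<^sub>v (mat_adjoint U *\<^sub>v y))"
    using mat_adjoint_mult_vec_cscalar_prod[OF U'(2) assms(2) mult_mat_vec_carrier[OF U'(2) assms(3)]]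
    by simp
  also have "U *\<^sub>v (mat_adjoint U *\<^sub>v y) = y"
    using U' assms(3) by (simp flip: assoc_mult_mat_vec[of _ n n _ n])
  finally show ?thesis .
qed

lemma cscalar_prod_unitary_conj:
  assumes U: "unitary_mat U n" and M: "M \<in> carrier_mat n n" and x: "x \<in> carrier_vec n"
  shows "((U * M * mat_adjoint U) *\<^sub>v x) \<bullet>c x
    = (M *\<^sub>v (mat_adjoint U *\<^sub>v x)) \<bullet>c (mat_adjoint U *\<^sub>v x)"
proof -
  note U' = unitary_matD[OF U]
  have Mx: "M *\<^sub>v (mat_adjoint U *\<^sub>v x) \<in> carrier_vec n"
    using U'(2) M x by simp
  have "(U * M * mat_adjoint U) *\<^sub>v x = U *\<^sub>v (M *\<^sub>v (mat_adjoint U *\<^sub>v x))"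
    using U'(1,2) M x mult_mat_vec_carrier[OF U'(2) x]
    by (simp add: assoc_mult_mat_vec[of "U * M" n n "mat_adjoint U" n] assoc_mult_mat_vec[of U n n M n])
  then show ?thesis
    using mat_adjoint_mult_vec_cscalar_prod[OF U'(1) Mx x] by simp
qed

lemma cscalar_prod_mat_diag:
  assumes "x \<in> carrier_vec n"
  shows "(mat_diag n (\<lambda>i. complex_of_real (a i)) *\<^sub>v x) \<bullet>c x
    = complex_of_real (\<Sum>i<n. a i * (cmod (x $ i))\<^sup>2)"
  using assms
  by (simp add: mat_diag_mult_vec scalar_prod_def lessThan_atLeast0 complex_norm_square mult.assoc
      del: of_real_power)

lemma cscalar_prod_unitary_conj_diag:
  assumes U: "unitary_mat U n" and x: "x \<in> carrier_vec n"
  shows "((U * mat_diag n (\<lambda>i. complex_of_real (a i)) * mat_adjoint U) *\<^sub>v x) \<bullet>c x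
    = complex_of_real (\<Sum>i<n. a i * (cmod ((mat_adjoint U *\<^sub>v x) $ i))\<^sup>2)"
  unfolding cscalar_prod_unitary_conj[OF U mat_diag_dim x]
  by (rule cscalar_prod_mat_diag[OF mult_mat_vec_carrier[OF unitary_matD(2)[OF U] x]])

lemma unitary_conj_diag_square:
  assumes U: "unitary_mat U n"
  shows "(U * mat_diag n (\<lambda>i. complex_of_real (d i)) * mat_adjoint U)
      * (U * mat_diag n (\<lambda>i. complex_of_real (d i)) * mat_adjoint U)
    = U * mat_diag n (\<lambda>i. complex_of_real ((d i)\<^sup>2)) * mat_adjoint U"
  unfolding unitary_conj_mult[OF U mat_diag_dim mat_diag_dim] by (simp add: power2_eq_square)

lemma cscalar_prod_one_plus_unitary_conj_diag_pow:
  assumes U: "unitary_mat U n" and x: "x \<in> carrier_vec n"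
  shows "(((1\<^sub>m n + U * mat_diag n (\<lambda>i. complex_of_real (f i)) * mat_adjoint U) ^\<^sub>m k) *\<^sub>v x) \<bullet>c x
    = complex_of_real (\<Sum>i<n. (1 + f i) ^ k * (cmod ((mat_adjoint U *\<^sub>v x) $ i))\<^sup>2)"
proof -
  have "(1\<^sub>m n + U * mat_diag n (\<lambda>i. complex_of_real (f i)) * mat_adjoint U) ^\<^sub>m k
      = U * mat_diag n (\<lambda>i. complex_of_real ((1 + f i) ^ k)) * mat_adjoint U"
    unfolding one_plus_unitary_conj[OF U mat_diag_dim] one_plus_mat_diag
      unitary_conj_pow[OF U mat_diag_dim] mat_diag_pow by simp
  then show ?thesis unfolding cscalar_prod_unitary_conj_diag[OF U x, symmetric] by simp
qed

lemma cscalar_prod_add_mult_vec: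
  assumes "A \<in> carrier_mat n n" and "B \<in> carrier_mat n n" and "x \<in> carrier_vec n"
  shows "((A + B) *\<^sub>v x) \<bullet>c x = (A *\<^sub>v x) \<bullet>c x + (B *\<^sub>v x) \<bullet>c x"
  using assms by (simp add: add_mult_distrib_mat_vec add_scalar_prod_distrib[of _ n])

section \<open>Two diagonalizations whose sum is the identity\<close>

lemma unitary_conj_sum_eq_one:
  assumes U: "unitary_mat U n" and V: "unitary_mat V n"
    and D: "D \<in> carrier_mat n n" and E: "E \<in> carrier_mat n n"
    and sum: "U * D * mat_adjoint U + V * E * mat_adjoint V = 1\<^sub>m n"
  shows "D * (mat_adjoint U * V) + (mat_adjoint U * V) * E = mat_adjoint U * V"
proof -
  note U' = unitary_matD[OF U] and V' = unitary_matD[OF V]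
  have UD: "U * D * mat_adjoint U \<in> carrier_mat n n" and VE: "V * E * mat_adjoint V \<in> carrier_mat n n"
    using U' V' D E by auto
  have "mat_adjoint U * (U * D * mat_adjoint U) * V = (mat_adjoint U * U) * D * (mat_adjoint U * V)"
    using U'(1,2) V'(1) D by (simp add: assoc_mult_mat[of _ n n _ n _ n])
  also have "\<dots> = D * (mat_adjoint U * V)" using U'(3) D by simp
  finally have left: "mat_adjoint U * (U * D * mat_adjoint U) * V = D * (mat_adjoint U * V)" .
  have "mat_adjoint U * (V * E * mat_adjoint V) * V = (mat_adjoint U * V) * E * (mat_adjoint V * V)"
    using U'(2) V'(1,2) E by (simp add: assoc_mult_mat[of _ n n _ n _ n])
  also have "\<dots> = (mat_adjoint U * V) * E" using U'(2) V'(1,3) E by simp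
  finally have right: "mat_adjoint U * (V * E * mat_adjoint V) * V = (mat_adjoint U * V) * E" .
  have "mat_adjoint U * V = mat_adjoint U * (U * D * mat_adjoint U + V * E * mat_adjoint V) * V"
    unfolding sum using U'(1,2) by simp
  also have "\<dots> = mat_adjoint U * (U * D * mat_adjoint U) * V
      + mat_adjoint U * (V * E * mat_adjoint V) * V"
    using mult_add_distrib_mat[OF U'(2) UD VE]
      add_mult_distrib_mat[of "mat_adjoint U * (U * D * mat_adjoint U)" n n
        "mat_adjoint U * (V * E * mat_adjoint V)" V n] U'(2) V'(1) UD VE
    by simp
  finally show ?thesis unfolding left right by simp
qed

lemma mat_diag_sum_eq_self_entry:
  fixes f g :: "nat \<Rightarrow> 'a :: idom"
  assumes X: "X \<in> carrier_mat n n" and eq: "mat_diag n f * X + X * mat_diag n g = X"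
    and i: "i < n" and j: "j < n" and Xij: "X $$ (i, j) \<noteq> 0"
  shows "f i + g j = 1"
proof -
  have "f i * X $$ (i, j) + X $$ (i, j) * g j = X $$ (i, j)"
    using arg_cong[OF eq, of "\<lambda>M. M $$ (i, j)"] X i j
    by (simp add: mat_diag_mult_left[OF X] mat_diag_mult_right[OF X])
  then have "(f i + g j) * X $$ (i, j) = 1 * X $$ (i, j)" by (simp add: algebra_simps)
  then show ?thesis using Xij by (simp only: mult_cancel_right) simp
qed

lemma unitary_row_nonzero:
  assumes X: "unitary_mat X n" and i: "i < n"
  shows "\<exists>j<n. X $$ (i, j) \<noteq> 0"
proof (rule ccontr)
  assume "\<not> (\<exists>j<n. X $$ (i, j) \<noteq> 0)"
  then have "(X * mat_adjoint X) $$ (i, i) = 0"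
    using unitary_matD(1)[OF X] i by (auto simp: scalar_prod_def intro!: sum.neutral)
  then show False using unitary_matD(4)[OF X] i by simp
qed

lemma cscalar_prod_intertwine:
  assumes X: "unitary_mat X n" and A: "A \<in> carrier_mat n n" and B: "B \<in> carrier_mat n n"
    and AB: "A * X = X * B" and x: "x \<in> carrier_vec n"
  shows "(B *\<^sub>v (mat_adjoint X *\<^sub>v x)) \<bullet>c (mat_adjoint X *\<^sub>v x) = (A *\<^sub>v x) \<bullet>c x"
proof -
  note X' = unitary_matD[OF X]
  have "X * B * mat_adjoint X = A * (X * mat_adjoint X)"
    using X'(1,2) A B by (simp flip: AB add: assoc_mult_mat[of _ n n _ n _ n])
  then have "X * B * mat_adjoint X = A" using X'(4) A by simp
  then show ?thesis using cscalar_prod_unitary_conj[OF X B x] by simp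
qed

lemma unitary_diag_sum_one_weights:
  fixes a b :: "nat \<Rightarrow> real" and h :: "real \<Rightarrow> real"
  assumes U: "unitary_mat U n" and V: "unitary_mat V n" and \<psi>: "\<psi> \<in> carrier_vec n"
    and sum: "U * mat_diag n (\<lambda>i. complex_of_real (a i)) * mat_adjoint U
      + V * mat_diag n (\<lambda>j. complex_of_real (b j)) * mat_adjoint V = 1\<^sub>m n"
  shows "(\<Sum>j<n. h (b j) * (cmod ((mat_adjoint V *\<^sub>v \<psi>) $ j))\<^sup>2)
    = (\<Sum>i<n. h (1 - a i) * (cmod ((mat_adjoint U *\<^sub>v \<psi>) $ i))\<^sup>2)"
proof -
  note U' = unitary_matD[OF U] and V' = unitary_matD[OF V]
  define X where "X = mat_adjoint U * V"
  have X: "unitary_mat X n"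
    unfolding X_def by (rule unitary_mat_mult[OF unitary_mat_adjoint[OF U] V])
  note X' = unitary_matD[OF X]
  have rel: "mat_diag n (\<lambda>i. complex_of_real (a i)) * X
      + X * mat_diag n (\<lambda>j. complex_of_real (b j)) = X"
    unfolding X_def by (rule unitary_conj_sum_eq_one[OF U V mat_diag_dim mat_diag_dim sum])
  have "mat_diag n (\<lambda>i. complex_of_real (h (1 - a i))) * X
      = X * mat_diag n (\<lambda>j. complex_of_real (h (b j)))"
  proof (rule eq_matI)
    fix i j assume "i < dim_row (X * mat_diag n (\<lambda>j. complex_of_real (h (b j))))"
      and "j < dim_col (X * mat_diag n (\<lambda>j. complex_of_real (h (b j))))"
    then have i: "i < n" and j: "j < n" using X'(1) by auto
    have "1 - a i = b j" if "X $$ (i, j) \<noteq> 0"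
    proof -
      have "complex_of_real (a i + b j) = 1"
        using mat_diag_sum_eq_self_entry[OF X'(1) rel i j that] by simp
      then show ?thesis by (simp only: of_real_eq_1_iff)
    qed
    then show "(mat_diag n (\<lambda>i. complex_of_real (h (1 - a i))) * X) $$ (i, j)
        = (X * mat_diag n (\<lambda>j. complex_of_real (h (b j)))) $$ (i, j)"
      using X'(1) i j by (cases "X $$ (i, j) = 0") (auto simp: mat_diag_mult_left mat_diag_mult_right)
  qed (use X'(1) in auto)
  moreover have "mat_adjoint X *\<^sub>v (mat_adjoint U *\<^sub>v \<psi>) = mat_adjoint V *\<^sub>v \<psi>"
  proof -
    have "mat_adjoint X = mat_adjoint V * U"
      unfolding X_def using mat_adjoint_mult[OF U'(2) V'(1)] by simp
    then show ?thesis
      using U' V'(1,2) \<psi>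
      by (simp add: assoc_mult_mat[of _ n n _ n _ n] flip: assoc_mult_mat_vec[of _ n n _ n])
  qed
  ultimately have
    "(mat_diag n (\<lambda>j. complex_of_real (h (b j))) *\<^sub>v (mat_adjoint V *\<^sub>v \<psi>)) \<bullet>c (mat_adjoint V *\<^sub>v \<psi>)
      = (mat_diag n (\<lambda>i. complex_of_real (h (1 - a i))) *\<^sub>v (mat_adjoint U *\<^sub>v \<psi>))
          \<bullet>c (mat_adjoint U *\<^sub>v \<psi>)"
    using cscalar_prod_intertwine[OF X mat_diag_dim mat_diag_dim _ mult_mat_vec_carrier[OF U'(2) \<psi>]]
    by metis
  then show ?thesis
    unfolding cscalar_prod_mat_diag[OF mult_mat_vec_carrier[OF U'(2) \<psi>]]
      cscalar_prod_mat_diag[OF mult_mat_vec_carrier[OF V'(2) \<psi>]] of_real_eq_iff .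
qed

lemma unitary_diag_sum_one_le_one:
  fixes a b :: "nat \<Rightarrow> real"
  assumes U: "unitary_mat U n" and V: "unitary_mat V n"
    and sum: "U * mat_diag n (\<lambda>i. complex_of_real (a i)) * mat_adjoint U
      + V * mat_diag n (\<lambda>j. complex_of_real (b j)) * mat_adjoint V = 1\<^sub>m n"
    and b: "\<And>j. j < n \<Longrightarrow> b j \<ge> 0" and i: "i < n"
  shows "a i \<le> 1"
proof -
  have X: "unitary_mat (mat_adjoint U * V) n"
    by (rule unitary_mat_mult[OF unitary_mat_adjoint[OF U] V])
  obtain j where j: "j < n" and Xij: "(mat_adjoint U * V) $$ (i, j) \<noteq> 0"
    using unitary_row_nonzero[OF X i] by blast
  have "complex_of_real (a i) + complex_of_real (b j) = 1"
    by (rule mat_diag_sum_eq_self_entry[OF unitary_matD(1)[OF X]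
          unitary_conj_sum_eq_one[OF U V mat_diag_dim mat_diag_dim sum] i j Xij])
  then have "a i + b j = 1" by (simp flip: of_real_add)
  then show ?thesis using b[OF j] by simp
qed

section \<open>The trigonometric bound\<close>

lemma power_one_plus_le_abs: "(1 + t) ^ m \<le> (1 + \<bar>t\<bar>) ^ m" for t :: real
proof -
  have "(1 + t) ^ m \<le> \<bar>1 + t\<bar> ^ m" by (simp flip: power_abs)
  also have "\<dots> \<le> (1 + \<bar>t\<bar>) ^ m" by (rule power_mono) auto
  finally show ?thesis .
qed

lemma one_plus_pow_le_SUP_cos_sin:
  fixes x :: real
  assumes x: "x\<^sup>2 \<le> 1"
  shows "(1 + x) ^ m + (1 + sqrt (1 - x\<^sup>2)) ^ m
    \<le> (SUP \<theta>::real. (1 + cos \<theta>) ^ m + (1 + sin \<theta>) ^ m)"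
proof -
  have "bdd_above (range (\<lambda>\<theta>::real. (1 + cos \<theta>) ^ m + (1 + sin \<theta>) ^ m))"
  proof (rule bdd_aboveI2)
    fix \<theta> :: real
    have "(1 + cos \<theta>) ^ m \<le> 2 ^ m" and "(1 + sin \<theta>) ^ m \<le> 2 ^ m"
      by (intro power_mono; smt (verit) cos_le_one cos_ge_minus_one sin_le_one sin_ge_minus_one)+
    then show "(1 + cos \<theta>) ^ m + (1 + sin \<theta>) ^ m \<le> 2 ^ m + 2 ^ m" by simp
  qed
  moreover have "\<bar>x\<bar> \<le> 1" using x by (simp add: abs_square_le_1)
  then have "cos (arccos \<bar>x\<bar>) = \<bar>x\<bar>" and "sin (arccos \<bar>x\<bar>) = sqrt (1 - x\<^sup>2)"
    using sin_arccos_abs[of "\<bar>x\<bar>"] by simp_all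
  ultimately have "(1 + \<bar>x\<bar>) ^ m + (1 + sqrt (1 - x\<^sup>2)) ^ m
      \<le> (SUP \<theta>::real. (1 + cos \<theta>) ^ m + (1 + sin \<theta>) ^ m)"
    using cSUP_upper[OF UNIV_I, of "\<lambda>\<theta>. (1 + cos \<theta>) ^ m + (1 + sin \<theta>) ^ m" "arccos \<bar>x\<bar>"]
    by simp
  then show ?thesis using power_one_plus_le_abs[of x m] by linarith
qed

theorem lemma2:
  fixes n m :: nat and S T :: "complex mat" and \<psi> :: "complex vec"
  assumes "S \<in> carrier_mat n n" and "T \<in> carrier_mat n n"
    and "hermitian_mat S" and "hermitian_mat T"
    and "S * S + T * T = 1\<^sub>m n"
    and "\<psi> \<in> carrier_vec n" and "\<psi> \<bullet>c \<psi> = 1"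
    and "m > 0"
  shows "Re ((((1\<^sub>m n + S) ^\<^sub>m m + (1\<^sub>m n + T) ^\<^sub>m m) *\<^sub>v \<psi>) \<bullet>c \<psi>)
           \<le> (SUP \<theta>::real. (1 + cos \<theta>) ^ m + (1 + sin \<theta>) ^ m)"
proof -
  note \<psi> = assms(6,7)
  obtain U d where U: "unitary_mat U n"
    and S: "S = U * mat_diag n (\<lambda>i. complex_of_real (d i)) * mat_adjoint U"
    using hermitian_mat_unitary_diagonalizable assms(1,3) by blast
  obtain V e where V: "unitary_mat V n"
    and T: "T = V * mat_diag n (\<lambda>j. complex_of_real (e j)) * mat_adjoint V"
    using hermitian_mat_unitary_diagonalizable assms(2,4) by blast
  define \<phi> where "\<phi> = mat_adjoint U *\<^sub>v \<psi>"
  define w where "w = mat_adjoint V *\<^sub>v \<psi>"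
  let ?M = "SUP \<theta>::real. (1 + cos \<theta>) ^ m + (1 + sin \<theta>) ^ m"
  have squares: "U * mat_diag n (\<lambda>i. complex_of_real ((d i)\<^sup>2)) * mat_adjoint U
      + V * mat_diag n (\<lambda>j. complex_of_real ((e j)\<^sup>2)) * mat_adjoint V = 1\<^sub>m n"
    using assms(5) unfolding S T unitary_conj_diag_square[OF U] unitary_conj_diag_square[OF V] .
  have "Re ((((1\<^sub>m n + S) ^\<^sub>m m + (1\<^sub>m n + T) ^\<^sub>m m) *\<^sub>v \<psi>) \<bullet>c \<psi>)
      = (\<Sum>i<n. (1 + d i) ^ m * (cmod (\<phi> $ i))\<^sup>2) + (\<Sum>j<n. (1 + e j) ^ m * (cmod (w $ j))\<^sup>2)"
    using unitary_matD[OF U] unitary_matD[OF V] \<psi>(1) unfolding S T \<phi>_def w_def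
    by (simp add: cscalar_prod_add_mult_vec[of _ n] cscalar_prod_one_plus_unitary_conj_diag_pow[OF U]
        cscalar_prod_one_plus_unitary_conj_diag_pow[OF V] del: of_real_sum)
  also have "(\<Sum>j<n. (1 + e j) ^ m * (cmod (w $ j))\<^sup>2)
      \<le> (\<Sum>j<n. (1 + sqrt ((e j)\<^sup>2)) ^ m * (cmod (w $ j))\<^sup>2)"
    by (intro sum_mono mult_right_mono) (simp_all add: power_one_plus_le_abs)
  also have "\<dots> = (\<Sum>i<n. (1 + sqrt (1 - (d i)\<^sup>2)) ^ m * (cmod (\<phi> $ i))\<^sup>2)"
    unfolding w_def \<phi>_def
    by (rule unitary_diag_sum_one_weights[OF U V \<psi>(1) squares, of "\<lambda>x. (1 + sqrt x) ^ m"])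
  also have "(\<Sum>i<n. (1 + d i) ^ m * (cmod (\<phi> $ i))\<^sup>2) + \<dots>
      \<le> (\<Sum>i<n. ?M * (cmod (\<phi> $ i))\<^sup>2)"
    unfolding sum.distrib[symmetric] distrib_right[symmetric]
    using unitary_diag_sum_one_le_one[OF U V squares]
    by (intro sum_mono mult_right_mono one_plus_pow_le_SUP_cos_sin) auto
  also have "\<dots> = ?M * Re (\<phi> \<bullet>c \<phi>)"
    unfolding \<phi>_def sum_distrib_left[symmetric]
    using cscalar_prod_self[OF mult_mat_vec_carrier[OF unitary_matD(2)[OF U] \<psi>(1)]] by simp
  finally show ?thesis
    unfolding \<phi>_def cscalar_prod_mult_vec_mat_adjoint[OF U \<psi>(1) \<psi>(1)] \<psi>(2) by simp
qed

end
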